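(* Let $\kappa$ be a regular uncountable cardinal and $I$ an ideal on $\kappa$. Then $I$ is subpleasant if and only if $I$ is subnormal.
   Context: An ideal on $\kappa$ is a family of subsets of $\kappa$ closed under subsets and finite unions, which is $<\kappa$-complete and contains all singletons. It is proper if $\kappa\notin I$. For $A\subseteq\kappa$ and $X_\alpha\subseteq\kappa$, $\bigtriangledown_{\alpha\in A}X_\alpha=\{\xi<\kappa:\exists\alpha<\xi\,(\alpha\in A\wedge \xi\in X_\alpha)\}$. $I$ is normal if $X_\alpha\in I$ for all $\alpha<\kappa$ implies $\bigtriangledown_{\alpha<\kappa}X_\alpha\in I$. $I$ is pleasant if whenever $A\in I$ and $X_\alpha\in I$ for all $\alpha$, then $\bigtriangledown_{\alpha\in A}X_\alpha\in I$. $I$ is subnormal if it is contained in a proper normal ideal on $\kappa$, and subpleasant if it is contained in a proper pleasant ideal on $\kappa$. *)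

theory Defs
  imports Main "HOL-Library.Countable_Set"
begin

unbundle cardinal_syntax

text \<open>The cardinal kappa is represented by a cardinal well-order r (an initial ordinal);
  its elements are Field r and the strict order is (a,b) in r with a distinct from b.\<close>

definition strict_less :: "'a rel \<Rightarrow> 'a \<Rightarrow> 'a \<Rightarrow> bool" where
  "strict_less r a b \<longleftrightarrow> (a, b) \<in> r \<and> a \<noteq> b"

definition is_ideal :: "'a rel \<Rightarrow> 'a set set \<Rightarrow> bool" where
  "is_ideal r I \<longleftrightarrow>
     I \<subseteq> Pow (Field r)
   \<and> (\<forall>X\<in>I. \<forall>Y. Y \<subseteq> X \<longrightarrow> Y \<in> I)
   \<and> (\<forall>X\<in>I. \<forall>Y\<in>I. X \<union> Y \<in> I)
   \<and> (\<forall>\<X>. \<X> \<subseteq> I \<and> |\<X>| <o r \<longrightarrow> \<Union>\<X> \<in> I)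
   \<and> (\<forall>\<alpha>\<in>Field r. {\<alpha>} \<in> I)"

definition proper_ideal :: "'a rel \<Rightarrow> 'a set set \<Rightarrow> bool" where
  "proper_ideal r I \<longleftrightarrow> Field r \<notin> I"

definition diag_union :: "'a rel \<Rightarrow> 'a set \<Rightarrow> ('a \<Rightarrow> 'a set) \<Rightarrow> 'a set" where
  "diag_union r A X = {\<xi> \<in> Field r. \<exists>\<alpha>. strict_less r \<alpha> \<xi> \<and> \<alpha> \<in> A \<and> \<xi> \<in> X \<alpha>}"

definition normal_ideal :: "'a rel \<Rightarrow> 'a set set \<Rightarrow> bool" where
  "normal_ideal r I \<longleftrightarrow>
     (\<forall>X. (\<forall>\<alpha>\<in>Field r. X \<alpha> \<in> I) \<longrightarrow> diag_union r (Field r) X \<in> I)"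

definition pleasant_ideal :: "'a rel \<Rightarrow> 'a set set \<Rightarrow> bool" where
  "pleasant_ideal r I \<longleftrightarrow>
     (\<forall>A X. A \<in> I \<and> (\<forall>\<alpha>\<in>Field r. X \<alpha> \<in> I) \<longrightarrow> diag_union r A X \<in> I)"

definition subnormal :: "'a rel \<Rightarrow> 'a set set \<Rightarrow> bool" where
  "subnormal r I \<longleftrightarrow>
     (\<exists>J. is_ideal r J \<and> proper_ideal r J \<and> normal_ideal r J \<and> I \<subseteq> J)"

definition subpleasant :: "'a rel \<Rightarrow> 'a set set \<Rightarrow> bool" where
  "subpleasant r I \<longleftrightarrow>
     (\<exists>J. is_ideal r J \<and> proper_ideal r J \<and> pleasant_ideal r J \<and> I \<subseteq> J)"

end

theory Submission
  imports Defs
begin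

text \<open>Normal ideals are pleasant, since a diagonal union over \<open>A\<close> is contained in the one over
  all of \<open>\<kappa>\<close>. Conversely, let \<open>J\<close> be a proper pleasant ideal and consider the sets covered by
  some \<open>\<nabla>\<^sub>\<alpha> X \<alpha> \<union> Z\<close> with all \<open>X \<alpha>\<close> and \<open>Z\<close> in \<open>J\<close>. They form an ideal containing \<open>J\<close>,
  and it is normal: a diagonal union of such sets is covered by \<open>\<nabla>\<^sub>\<gamma> W \<gamma>\<close> with
  \<open>W \<gamma> = Z \<gamma> \<union> \<Union>{X \<alpha> \<beta> | \<alpha> \<beta>. \<alpha>, \<beta> \<le> \<gamma>}\<close>, which lies in \<open>J\<close> because initial segments of \<open>\<kappa>\<close>
  have size \<open>< \<kappa>\<close>. It is proper: if \<open>\<kappa> \<subseteq> \<nabla>\<^sub>\<alpha> X \<alpha> \<union> Z\<close>, let \<open>Z 0 = Z\<close> and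
  \<open>Z (n + 1) = Z n \<union> \<nabla>\<^bsub>\<alpha> \<in> Z n\<^esub> X \<alpha>\<close>. Pleasantness puts every \<open>Z n\<close> into \<open>J\<close>, well-founded
  induction puts every \<open>\<xi> < \<kappa>\<close> into some \<open>Z n\<close>, and as \<open>\<kappa>\<close> is uncountable, \<open>\<Union>\<^sub>n Z n \<in> J\<close>.\<close>

lemma ideal_subset_Field: "is_ideal r J \<Longrightarrow> X \<in> J \<Longrightarrow> X \<subseteq> Field r"
  unfolding is_ideal_def by auto

lemma ideal_downward_closed: "is_ideal r J \<Longrightarrow> X \<in> J \<Longrightarrow> Y \<subseteq> X \<Longrightarrow> Y \<in> J"
  unfolding is_ideal_def by auto

lemma ideal_Un: "is_ideal r J \<Longrightarrow> X \<in> J \<Longrightarrow> Y \<in> J \<Longrightarrow> X \<union> Y \<in> J"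
  unfolding is_ideal_def by auto

lemma ideal_singleton: "is_ideal r J \<Longrightarrow> \<alpha> \<in> Field r \<Longrightarrow> {\<alpha>} \<in> J"
  unfolding is_ideal_def by auto

lemma ideal_empty:
  assumes "is_ideal r J" "Field r \<noteq> {}"
  shows "{} \<in> J"
proof -
  obtain \<alpha> where "\<alpha> \<in> Field r" using assms(2) by blast
  then have "{\<alpha>} \<in> J" by (rule ideal_singleton[OF assms(1)])
  then show ?thesis using assms(1) ideal_downward_closed by blast
qed

lemma ideal_Union: "is_ideal r J \<Longrightarrow> \<X> \<subseteq> J \<Longrightarrow> |\<X>| <o r \<Longrightarrow> \<Union>\<X> \<in> J"
  unfolding is_ideal_def by auto

lemma ideal_UN:
  assumes "is_ideal r J" "\<forall>i\<in>S. F i \<in> J" "|S| <o r"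
  shows "(\<Union>i\<in>S. F i) \<in> J"
proof -
  have "|F ` S| <o r" using card_of_image assms(3) by (rule ordLeq_ordLess_trans)
  with assms(1,2) show ?thesis by (intro ideal_Union) auto
qed

lemma ideal_UN_under:
  assumes "Card_order r" "is_ideal r J" "\<gamma> \<in> Field r" "\<forall>\<beta>\<in>under r \<gamma>. F \<beta> \<in> J"
  shows "(\<Union>\<beta>\<in>under r \<gamma>. F \<beta>) \<in> J"
proof -
  have "\<gamma> \<in> under r \<gamma>"
    using assms(1,3) by (intro Refl_under_in) (auto simp: card_order_on_def
        well_order_on_def linear_order_on_def partial_order_on_def preorder_on_def)
  then have "F \<gamma> \<in> J" using assms(4) by blast
  moreover have "(\<Union>\<beta>\<in>underS r \<gamma>. F \<beta>) \<in> J"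
    using assms(4) card_of_underS[OF assms(1,3)]
    by (intro ideal_UN[OF assms(2)]) (auto simp: underS_def under_def)
  ultimately have "(\<Union>\<beta>\<in>underS r \<gamma>. F \<beta>) \<union> F \<gamma> \<in> J"
    using assms(2) ideal_Un by blast
  moreover have "(\<Union>\<beta>\<in>under r \<gamma>. F \<beta>) \<subseteq> (\<Union>\<beta>\<in>underS r \<gamma>. F \<beta>) \<union> F \<gamma>"
    by (auto simp: under_def underS_def)
  ultimately show ?thesis by (rule ideal_downward_closed[OF assms(2)])
qed

lemma countable_ordLess_uncountable_Card_order:
  assumes "Card_order r" "uncountable (Field r)" "countable A"
  shows "|A| <o r"
proof (rule ccontr)
  assume "\<not> |A| <o r"
  moreover have "Well_order r" using assms(1) by (rule card_order_on_well_order_on)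
  ultimately have "r \<le>o |A|" using not_ordLess_iff_ordLeq card_of_Well_order by blast
  then have "|Field r| \<le>o |A|" by (rule ordIso_ordLeq_trans[OF card_of_Field_ordIso[OF assms(1)]])
  then obtain f where f: "inj_on f (Field r)" "f ` Field r \<subseteq> A"
    using card_of_ordLeq[of "Field r" A] by blast
  have "countable (f ` Field r)" using f(2) assms(3) by (rule countable_subset)
  then have "countable (Field r)" using f(1) by (rule countable_image_inj_on)
  with assms(2) show False ..
qed

lemma ideal_countable_UN:
  assumes "Card_order r" "uncountable (Field r)" "is_ideal r J" "\<And>n::nat. B n \<in> J"
  shows "(\<Union>n. B n) \<in> J"
proof (rule ideal_UN[OF assms(3)])
  show "|UNIV :: nat set| <o r"
    using assms(1,2) countableI_type by (rule countable_ordLess_uncountable_Card_order)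
qed (use assms(4) in blast)

lemma diag_union_mono: "A \<subseteq> A' \<Longrightarrow> diag_union r A X \<subseteq> diag_union r A' X"
  unfolding diag_union_def by blast

lemma diag_union_mono_family: "(\<And>\<alpha>. X \<alpha> \<subseteq> X' \<alpha>) \<Longrightarrow> diag_union r A X \<subseteq> diag_union r A X'"
  unfolding diag_union_def by blast

lemma diag_union_Un_family:
  "diag_union r A (\<lambda>\<alpha>. X \<alpha> \<union> X' \<alpha>) = diag_union r A X \<union> diag_union r A X'"
  unfolding diag_union_def by blast

lemma diag_union_Field: "diag_union r A X \<subseteq> Field r"
  unfolding diag_union_def by blast

lemma normal_imp_pleasant_ideal:
  assumes "is_ideal r J" "normal_ideal r J"
  shows "pleasant_ideal r J"
  unfolding pleasant_ideal_def
proof (intro allI impI, elim conjE)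
  fix A X assume "A \<in> J" "\<forall>\<alpha>\<in>Field r. X \<alpha> \<in> J"
  have "(\<forall>\<alpha>\<in>Field r. X \<alpha> \<in> J) \<longrightarrow> diag_union r (Field r) X \<in> J"
    using assms(2) unfolding normal_ideal_def by (rule spec)
  then have "diag_union r (Field r) X \<in> J" using \<open>\<forall>\<alpha>\<in>Field r. X \<alpha> \<in> J\<close> by (rule mp)
  moreover have "diag_union r A X \<subseteq> diag_union r (Field r) X"
    using ideal_subset_Field[OF assms(1) \<open>A \<in> J\<close>] by (rule diag_union_mono)
  ultimately show "diag_union r A X \<in> J" by (rule ideal_downward_closed[OF assms(1)])
qed

definition normal_closure :: "'a rel \<Rightarrow> 'a set set \<Rightarrow> 'a set set" where
  "normal_closure r J = {Y. Y \<subseteq> Field r \<and> (\<exists>X Z. (\<forall>\<alpha>\<in>Field r. X \<alpha> \<in> J) \<and> Z \<in> J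
       \<and> Y \<subseteq> diag_union r (Field r) X \<union> Z)}"

lemma normal_closureI:
  assumes "Y \<subseteq> Field r" "\<forall>\<alpha>\<in>Field r. X \<alpha> \<in> J" "Z \<in> J" "Y \<subseteq> diag_union r (Field r) X \<union> Z"
  shows "Y \<in> normal_closure r J"
  using assms unfolding normal_closure_def by blast

lemma normal_closureE:
  assumes "Y \<in> normal_closure r J"
  obtains X Z where "Y \<subseteq> Field r" "\<forall>\<alpha>\<in>Field r. X \<alpha> \<in> J" "Z \<in> J"
    "Y \<subseteq> diag_union r (Field r) X \<union> Z"
  using assms unfolding normal_closure_def by blast

lemma normal_closure_choice:
  assumes "\<forall>i\<in>S. Y i \<in> normal_closure r J"
  obtains X Z where "\<forall>i\<in>S. (\<forall>\<alpha>\<in>Field r. X i \<alpha> \<in> J) \<and> Z i \<in> J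
    \<and> Y i \<subseteq> diag_union r (Field r) (X i) \<union> Z i"
proof -
  have "\<forall>i\<in>S. \<exists>XZ. (\<forall>\<alpha>\<in>Field r. fst XZ \<alpha> \<in> J) \<and> snd XZ \<in> J
    \<and> Y i \<subseteq> diag_union r (Field r) (fst XZ) \<union> snd XZ"
    using assms unfolding normal_closure_def by auto
  then obtain f where "\<forall>i\<in>S. (\<forall>\<alpha>\<in>Field r. fst (f i) \<alpha> \<in> J) \<and> snd (f i) \<in> J
    \<and> Y i \<subseteq> diag_union r (Field r) (fst (f i)) \<union> snd (f i)"
    by (rule bchoice[THEN exE])
  then show ?thesis by (rule that[of "\<lambda>i. fst (f i)" "\<lambda>i. snd (f i)"])
qed

lemma subset_normal_closure:
  assumes "is_ideal r J" "Field r \<noteq> {}"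
  shows "J \<subseteq> normal_closure r J"
proof
  fix Y assume "Y \<in> J"
  moreover have "\<forall>\<alpha>\<in>Field r. (\<lambda>_. {}) \<alpha> \<in> J" using ideal_empty[OF assms] by simp
  ultimately show "Y \<in> normal_closure r J"
    using assms(1) ideal_subset_Field by (intro normal_closureI) auto
qed

lemma is_ideal_normal_closure:
  assumes "is_ideal r J" "Field r \<noteq> {}"
  shows "is_ideal r (normal_closure r J)"
  unfolding is_ideal_def
proof (intro conjI ballI allI impI)
  show "normal_closure r J \<subseteq> Pow (Field r)" unfolding normal_closure_def by blast
next
  fix X Y assume "X \<in> normal_closure r J" "Y \<subseteq> X"
  then show "Y \<in> normal_closure r J" unfolding normal_closure_def by blast
next
  fix Y\<^sub>1 Y\<^sub>2 assume "Y\<^sub>1 \<in> normal_closure r J" "Y\<^sub>2 \<in> normal_closure r J"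
  obtain X\<^sub>1 Z\<^sub>1 where
    "Y\<^sub>1 \<subseteq> Field r" "\<forall>\<alpha>\<in>Field r. X\<^sub>1 \<alpha> \<in> J" "Z\<^sub>1 \<in> J" "Y\<^sub>1 \<subseteq> diag_union r (Field r) X\<^sub>1 \<union> Z\<^sub>1"
    using \<open>Y\<^sub>1 \<in> normal_closure r J\<close> by (rule normal_closureE)
  moreover obtain X\<^sub>2 Z\<^sub>2 where
    "Y\<^sub>2 \<subseteq> Field r" "\<forall>\<alpha>\<in>Field r. X\<^sub>2 \<alpha> \<in> J" "Z\<^sub>2 \<in> J" "Y\<^sub>2 \<subseteq> diag_union r (Field r) X\<^sub>2 \<union> Z\<^sub>2"
    using \<open>Y\<^sub>2 \<in> normal_closure r J\<close> by (rule normal_closureE)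
  ultimately have "Y\<^sub>1 \<union> Y\<^sub>2 \<subseteq> Field r" "\<forall>\<alpha>\<in>Field r. X\<^sub>1 \<alpha> \<union> X\<^sub>2 \<alpha> \<in> J" "Z\<^sub>1 \<union> Z\<^sub>2 \<in> J"
    "Y\<^sub>1 \<union> Y\<^sub>2 \<subseteq> diag_union r (Field r) (\<lambda>\<alpha>. X\<^sub>1 \<alpha> \<union> X\<^sub>2 \<alpha>) \<union> (Z\<^sub>1 \<union> Z\<^sub>2)"
    unfolding diag_union_Un_family by (auto intro: ideal_Un[OF assms(1)])
  then show "Y\<^sub>1 \<union> Y\<^sub>2 \<in> normal_closure r J" by (rule normal_closureI)
next
  fix \<Y> assume "\<Y> \<subseteq> normal_closure r J \<and> |\<Y>| <o r"
  then have \<Y>: "\<Y> \<subseteq> normal_closure r J" "|\<Y>| <o r" by blast+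
  then obtain X Z where XZ: "\<forall>Y\<in>\<Y>. (\<forall>\<alpha>\<in>Field r. X Y \<alpha> \<in> J) \<and> Z Y \<in> J
       \<and> Y \<subseteq> diag_union r (Field r) (X Y) \<union> Z Y"
    using normal_closure_choice[of \<Y> "\<lambda>Y. Y"] by blast
  have "\<Union>\<Y> \<subseteq> Field r" using \<Y>(1) unfolding normal_closure_def by blast
  moreover have "\<forall>\<alpha>\<in>Field r. (\<Union>Y\<in>\<Y>. X Y \<alpha>) \<in> J"
  proof
    fix \<alpha> assume "\<alpha> \<in> Field r"
    with XZ have "\<forall>Y\<in>\<Y>. X Y \<alpha> \<in> J" by blast
    then show "(\<Union>Y\<in>\<Y>. X Y \<alpha>) \<in> J" using \<Y>(2) by (rule ideal_UN[OF assms(1)])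
  qed
  moreover have "(\<Union>Y\<in>\<Y>. Z Y) \<in> J"
    using XZ \<Y>(2) by (intro ideal_UN[OF assms(1)]) blast+
  moreover have "\<Union>\<Y> \<subseteq> diag_union r (Field r) (\<lambda>\<alpha>. \<Union>Y\<in>\<Y>. X Y \<alpha>) \<union> (\<Union>Y\<in>\<Y>. Z Y)"
  proof
    fix \<xi> assume "\<xi> \<in> \<Union>\<Y>"
    then obtain Y where "Y \<in> \<Y>" "\<xi> \<in> Y" by blast
    moreover have "diag_union r (Field r) (X Y) \<subseteq> diag_union r (Field r) (\<lambda>\<alpha>. \<Union>Y\<in>\<Y>. X Y \<alpha>)"
      using \<open>Y \<in> \<Y>\<close> by (intro diag_union_mono_family) blast
    ultimately show "\<xi> \<in> diag_union r (Field r) (\<lambda>\<alpha>. \<Union>Y\<in>\<Y>. X Y \<alpha>) \<union> (\<Union>Y\<in>\<Y>. Z Y)"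
      using XZ by blast
  qed
  ultimately show "\<Union>\<Y> \<in> normal_closure r J" by (rule normal_closureI)
next
  fix \<alpha> assume "\<alpha> \<in> Field r"
  then show "{\<alpha>} \<in> normal_closure r J"
    using subset_normal_closure[OF assms] ideal_singleton[OF assms(1)] by blast
qed

lemma diag_union_diag_union_subset:
  assumes "Well_order r" "\<forall>\<alpha>\<in>Field r. Y \<alpha> \<subseteq> diag_union r (Field r) (X \<alpha>) \<union> Z \<alpha>"
  shows "diag_union r (Field r) Y
    \<subseteq> diag_union r (Field r) (\<lambda>\<gamma>. (\<Union>\<alpha>\<in>under r \<gamma>. \<Union>\<beta>\<in>under r \<gamma>. X \<alpha> \<beta>) \<union> Z \<gamma>)"
    (is "_ \<subseteq> diag_union r (Field r) ?W")
proof
  fix \<xi> assume "\<xi> \<in> diag_union r (Field r) Y"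
  then obtain \<alpha> where \<alpha>: "\<xi> \<in> Field r" "strict_less r \<alpha> \<xi>" "\<alpha> \<in> Field r" "\<xi> \<in> Y \<alpha>"
    unfolding diag_union_def by blast
  with assms(2) consider "\<xi> \<in> Z \<alpha>" | \<beta> where "strict_less r \<beta> \<xi>" "\<beta> \<in> Field r" "\<xi> \<in> X \<alpha> \<beta>"
    unfolding diag_union_def by blast
  then show "\<xi> \<in> diag_union r (Field r) ?W"
  proof cases
    case 1
    with \<alpha> show ?thesis unfolding diag_union_def by blast
  next
    case 2
    obtain \<gamma> where "\<gamma> \<in> {\<alpha>, \<beta>}" "\<alpha> \<in> under r \<gamma>" "\<beta> \<in> under r \<gamma>"
      using wo_rel.TOTALS[of r] assms(1) \<alpha>(3) 2(2) Refl_under_in[of r]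
      unfolding wo_rel_def under_def well_order_on_def linear_order_on_def
        partial_order_on_def preorder_on_def by blast
    with \<alpha> 2 show ?thesis unfolding diag_union_def by blast
  qed
qed

lemma normal_normal_closure:
  assumes "Card_order r" "is_ideal r J" "Field r \<noteq> {}"
  shows "normal_ideal r (normal_closure r J)"
  unfolding normal_ideal_def
proof (intro allI impI)
  fix Y assume "\<forall>\<alpha>\<in>Field r. Y \<alpha> \<in> normal_closure r J"
  then obtain X Z where XZ: "\<forall>\<alpha>\<in>Field r. (\<forall>\<beta>\<in>Field r. X \<alpha> \<beta> \<in> J) \<and> Z \<alpha> \<in> J
       \<and> Y \<alpha> \<subseteq> diag_union r (Field r) (X \<alpha>) \<union> Z \<alpha>"
    by (rule normal_closure_choice)
  define W where "W \<gamma> = (\<Union>\<alpha>\<in>under r \<gamma>. \<Union>\<beta>\<in>under r \<gamma>. X \<alpha> \<beta>) \<union> Z \<gamma>" for \<gamma>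
  have "W \<gamma> \<in> J" if "\<gamma> \<in> Field r" for \<gamma>
  proof -
    have "\<forall>\<alpha>\<in>under r \<gamma>. \<forall>\<beta>\<in>under r \<gamma>. X \<alpha> \<beta> \<in> J"
      using XZ under_Field[of r \<gamma>] by blast
    then have "(\<Union>\<alpha>\<in>under r \<gamma>. \<Union>\<beta>\<in>under r \<gamma>. X \<alpha> \<beta>) \<in> J"
      using ideal_UN_under[OF assms(1,2) that] by simp
    moreover have "Z \<gamma> \<in> J" using XZ that by blast
    ultimately show ?thesis unfolding W_def by (rule ideal_Un[OF assms(2)])
  qed
  moreover have "diag_union r (Field r) Y \<subseteq> diag_union r (Field r) W"
    unfolding W_def using card_order_on_well_order_on[OF assms(1)]
    by (rule diag_union_diag_union_subset) (use XZ in blast)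
  ultimately show "diag_union r (Field r) Y \<in> normal_closure r J"
    using ideal_empty[OF assms(2,3)] diag_union_Field[of r "Field r" Y]
    by (intro normal_closureI[where X = W and Z = "{}"]) auto
qed

primrec diag_iterate :: "'a rel \<Rightarrow> ('a \<Rightarrow> 'a set) \<Rightarrow> 'a set \<Rightarrow> nat \<Rightarrow> 'a set" where
  "diag_iterate r X Z 0 = Z"
| "diag_iterate r X Z (Suc n) = diag_iterate r X Z n \<union> diag_union r (diag_iterate r X Z n) X"

lemma diag_iterate_mem_ideal:
  assumes "is_ideal r J" "pleasant_ideal r J" "\<forall>\<alpha>\<in>Field r. X \<alpha> \<in> J" "Z \<in> J"
  shows "diag_iterate r X Z n \<in> J"
proof (induction n)
  case 0
  from assms(4) show ?case by simp
next
  case (Suc n)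
  have "diag_union r (diag_iterate r X Z n) X \<in> J"
    using assms(2) Suc assms(3) unfolding pleasant_ideal_def by blast
  with Suc show ?case by (simp add: ideal_Un[OF assms(1)])
qed

lemma Field_subset_UN_diag_iterate:
  assumes "Well_order r" "Field r \<subseteq> diag_union r (Field r) X \<union> Z"
  shows "Field r \<subseteq> (\<Union>n. diag_iterate r X Z n)"
proof
  fix \<xi> assume "\<xi> \<in> Field r"
  have "wf (r - Id)" using assms(1) unfolding well_order_on_def by (rule conjunct2)
  then show "\<xi> \<in> (\<Union>n. diag_iterate r X Z n)"
    using \<open>\<xi> \<in> Field r\<close>
  proof (induction \<xi> rule: wf_induct_rule)
    case (less \<xi>)
    show ?case
    proof (cases "\<xi> \<in> Z")
      case True
      then have "\<xi> \<in> diag_iterate r X Z 0" by simp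
      then show ?thesis by blast
    next
      case False
      with assms(2) less.prems obtain \<alpha> where \<alpha>: "strict_less r \<alpha> \<xi>" "\<xi> \<in> X \<alpha>"
        unfolding diag_union_def by blast
      then have "(\<alpha>, \<xi>) \<in> r - Id" "\<alpha> \<in> Field r"
        unfolding strict_less_def by (auto intro: FieldI1)
      then obtain n where "\<alpha> \<in> diag_iterate r X Z n" using less.IH by blast
      with \<alpha> less.prems have "\<xi> \<in> diag_union r (diag_iterate r X Z n) X"
        unfolding diag_union_def by blast
      then have "\<xi> \<in> diag_iterate r X Z (Suc n)" by simp
      then show ?thesis by blast
    qed
  qed
qed

lemma proper_normal_closure:
  assumes "Card_order r" "uncountable (Field r)"
    and "is_ideal r J" "proper_ideal r J" "pleasant_ideal r J"
  shows "proper_ideal r (normal_closure r J)"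
  unfolding proper_ideal_def
proof
  assume "Field r \<in> normal_closure r J"
  then obtain X Z where XZ: "\<forall>\<alpha>\<in>Field r. X \<alpha> \<in> J" "Z \<in> J"
    "Field r \<subseteq> diag_union r (Field r) X \<union> Z"
    by (rule normal_closureE)
  have "Field r \<subseteq> (\<Union>n. diag_iterate r X Z n)"
    using card_order_on_well_order_on[OF assms(1)] XZ(3) by (rule Field_subset_UN_diag_iterate)
  moreover have "(\<Union>n. diag_iterate r X Z n) \<in> J"
    using assms(1-3) diag_iterate_mem_ideal[OF assms(3,5) XZ(1,2)] by (rule ideal_countable_UN)
  ultimately have "Field r \<in> J" by (rule ideal_downward_closed[OF assms(3), rotated])
  with assms(4) show False unfolding proper_ideal_def by contradiction
qed

theorem corollary2p3:
  fixes r :: "'a rel" and I :: "'a set set"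
  assumes "Card_order r"
    and "regularCard r"
    and "uncountable (Field r)"
    and "is_ideal r I"
  shows "subpleasant r I \<longleftrightarrow> subnormal r I"
proof
  assume "subpleasant r I"
  then obtain J where J: "is_ideal r J" "proper_ideal r J" "pleasant_ideal r J" "I \<subseteq> J"
    unfolding subpleasant_def by blast
  have "Field r \<noteq> {}" using assms(3) by auto
  then have "is_ideal r (normal_closure r J)" "normal_ideal r (normal_closure r J)"
    "proper_ideal r (normal_closure r J)" "I \<subseteq> normal_closure r J"
    using is_ideal_normal_closure[OF J(1)] normal_normal_closure[OF assms(1) J(1)]
      proper_normal_closure[OF assms(1,3) J(1-3)] subset_normal_closure[OF J(1)] J(4)
    by auto
  then show "subnormal r I" unfolding subnormal_def by blast
next
  assume "subnormal r I"
  then show "subpleasant r I"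
    unfolding subnormal_def subpleasant_def using normal_imp_pleasant_ideal by blast
qed

end
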